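(* Let $l\ge1$ and $m\ge n\ge0$ be integers with $m\ge1$. Let $\tilde D=\tilde D_1\cdots\tilde D_m$ be registers each with state space $\mathbb C^{2^l}$ and let $E$ be an additional register with Hilbert space $\mathcal H_E$. Let $|\psi\rangle_{\tilde DE}\in W^m_n\otimes\mathcal H_E$ be a normalized state such that for every operator $A$ acting on $\tilde D$ and every permutation $\pi\in S_m$, $\|A_{\tilde D}\pi_{\tilde D}|\psi\rangle_{\tilde DE}\|=\|A_{\tilde D}|\psi\rangle_{\tilde DE}\|$. Then \[\big\|\langle 0^l|_{\tilde D_1}|\psi\rangle_{\tilde DE}\big\|^2\ge\frac{2^{-l}n}{m}-2^{1-l/2}\sqrt{\frac{n(m-n)}{m^2}}.\]
   Context: $|+^l\rangle=2^{-l/2}\sum_{y\in\{0,1\}^l}|y\rangle$. For $m\ge n$, \[W^m_n=\mathrm{span}\Big\{|+^l\rangle^{\otimes|S|}_{\tilde D_S}\otimes|\phi\rangle_{\tilde D_{S^c}}\ :\ S\subseteq[m],\ |S|\ge n,\ |\phi\rangle\in(\mathbb C^{2^l})^{\otimes(m-|S|)}\Big\}\subseteq(\mathbb C^{2^l})^{\otimes m}.\] A permutation $\pi\in S_m$ acts on $\tilde D$ by permuting subregisters: $\pi|y_1\rangle\cdots|y_m\rangle=|y_{\pi^{-1}(1)}\rangle\cdots|y_{\pi^{-1}(m)}\rangle$. *)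

theory Defs
  imports "HOL-Analysis.Analysis"
begin

text \<open>Registers D_1..D_m are indexed by 0..m-1; a computational basis state of
  the register D is a tuple y with y i in {0..<2^l} for i < m.
  A vector of (C^(2^l))^(tensor m) tensor H_E is represented by its coefficient function
  psi y e, where e ranges over an (arbitrary) orthonormal basis of H_E.\<close>

definition basisD :: "nat \<Rightarrow> nat \<Rightarrow> (nat \<Rightarrow> nat) set" where
  "basisD l m = ({0..<m} \<rightarrow>\<^sub>E {0..<2^l})"

definition in_DE :: "nat \<Rightarrow> nat \<Rightarrow> ((nat \<Rightarrow> nat) \<Rightarrow> 'e \<Rightarrow> complex) \<Rightarrow> bool" where
  "in_DE l m psi \<longleftrightarrow> (\<forall>y\<in>basisD l m. (\<lambda>e. (cmod (psi y e))\<^sup>2) summable_on UNIV)"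

definition sqnorm :: "nat \<Rightarrow> nat \<Rightarrow> ((nat \<Rightarrow> nat) \<Rightarrow> 'e \<Rightarrow> complex) \<Rightarrow> real" where
  "sqnorm l m psi = (\<Sum>y\<in>basisD l m. \<Sum>\<^sub>\<infinity>e. (cmod (psi y e))\<^sup>2)"

definition vnorm :: "nat \<Rightarrow> nat \<Rightarrow> ((nat \<Rightarrow> nat) \<Rightarrow> 'e \<Rightarrow> complex) \<Rightarrow> real" where
  "vnorm l m psi = sqrt (sqnorm l m psi)"

definition applyD :: "nat \<Rightarrow> nat \<Rightarrow> ((nat \<Rightarrow> nat) \<Rightarrow> (nat \<Rightarrow> nat) \<Rightarrow> complex)
    \<Rightarrow> ((nat \<Rightarrow> nat) \<Rightarrow> 'e \<Rightarrow> complex) \<Rightarrow> ((nat \<Rightarrow> nat) \<Rightarrow> 'e \<Rightarrow> complex)" where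
  "applyD l m A psi = (\<lambda>y e. \<Sum>y'\<in>basisD l m. A y y' * psi y' e)"

text \<open>A permutation pi of the subregisters: pi |y_1>...|y_m> = |y_(pi^-1 1)>...|y_(pi^-1 m)>,
  so the coefficient of the basis state y' in pi psi is the coefficient of y' o pi in psi.\<close>
definition permD :: "(nat \<Rightarrow> nat) \<Rightarrow> ((nat \<Rightarrow> nat) \<Rightarrow> 'e \<Rightarrow> complex) \<Rightarrow> ((nat \<Rightarrow> nat) \<Rightarrow> 'e \<Rightarrow> complex)" where
  "permD \<pi> psi = (\<lambda>y e. psi (y \<circ> \<pi>) e)"

text \<open>Generators of W^m_n: |+^l>^{tensor S} on D_S tensor an arbitrary |phi> on D_{S^c},
  where phi is a vector of (C^(2^l))^(tensor (m-|S|)) given by its coefficients on basis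
  states of D_{S^c}.\<close>
definition W_gens :: "nat \<Rightarrow> nat \<Rightarrow> nat \<Rightarrow> ((nat \<Rightarrow> nat) \<Rightarrow> complex) set" where
  "W_gens l m n = {v. \<exists>S \<phi>. S \<subseteq> {0..<m} \<and> card S \<ge> n \<and>
      v = (\<lambda>y. complex_of_real ((2 powr (- real l / 2)) ^ card S) * \<phi> (restrict y ({0..<m} - S)))}"

definition in_W :: "nat \<Rightarrow> nat \<Rightarrow> nat \<Rightarrow> ((nat \<Rightarrow> nat) \<Rightarrow> complex) \<Rightarrow> bool" where
  "in_W l m n v \<longleftrightarrow> (\<exists>k (c :: nat \<Rightarrow> complex) g. (\<forall>j<k. g j \<in> W_gens l m n) \<and>
      (\<forall>y\<in>basisD l m. v y = (\<Sum>j<k. c j * g j y)))"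

text \<open>psi in W^m_n tensor H_E: every H_E-coordinate slice lies in W^m_n
  (W is a finite-dimensional, hence closed, subspace).\<close>
definition in_W_E :: "nat \<Rightarrow> nat \<Rightarrow> nat \<Rightarrow> ((nat \<Rightarrow> nat) \<Rightarrow> 'e \<Rightarrow> complex) \<Rightarrow> bool" where
  "in_W_E l m n psi \<longleftrightarrow> in_DE l m psi \<and> (\<forall>e. in_W l m n (\<lambda>y. psi y e))"

definition sqnorm_bra0_D1 :: "nat \<Rightarrow> nat \<Rightarrow> ((nat \<Rightarrow> nat) \<Rightarrow> 'e \<Rightarrow> complex) \<Rightarrow> real" where
  "sqnorm_bra0_D1 l m psi = (\<Sum>y\<in>{y\<in>basisD l m. y 0 = 0}. \<Sum>\<^sub>\<infinity>e. (cmod (psi y e))\<^sup>2)"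

end

theory Submission
  imports Defs
begin

text \<open>Let \<open>P_i\<close> be the projector \<open>|+^l\<rangle>\<langle>+^l|\<close> on register \<open>D_i\<close>. The \<open>P_i\<close> commute and every
  generator of \<open>W^m_n\<close> is fixed by at least \<open>n\<close> of them, hence \<open>\<Sum>i. \<parallel>P_i \<psi>\<parallel>\<^sup>2 \<ge> n\<close>.
  Since \<open>P_i \<psi>\<close> is uniform in the \<open>i\<close>-th coordinate, \<open>\<parallel>\<langle>0^l|_D_i P_i \<psi>\<parallel>\<^sup>2 = 2^-l \<parallel>P_i \<psi>\<parallel>\<^sup>2\<close>, and
  replacing \<open>P_i \<psi>\<close> by \<open>\<psi>\<close> costs at most \<open>t \<parallel>P_i \<psi>\<parallel>\<^sup>2 2^-l + \<parallel>\<psi> - P_i \<psi>\<parallel>\<^sup>2 / t\<close> for any \<open>t > 0\<close>.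
  By permutation invariance \<open>\<parallel>\<langle>0^l|_D_i \<psi>\<parallel>\<close> does not depend on \<open>i\<close>; averaging over \<open>i\<close> gives
  a bound that is linear in \<open>n/m\<close> for each \<open>t\<close>, and optimising \<open>t\<close> gives the square-root term.\<close>

lemma finite_basisD: "finite (basisD l m)"
  by (simp add: basisD_def finite_PiE)

lemma fun_upd_in_basisD: "y \<in> basisD l m \<Longrightarrow> i < m \<Longrightarrow> x < 2^l \<Longrightarrow> y(i := x) \<in> basisD l m"
  by (auto simp: basisD_def PiE_iff extensional_def)

lemma basisD_less: "y \<in> basisD l m \<Longrightarrow> i < m \<Longrightarrow> y i < 2^l"
  by (auto simp: basisD_def PiE_iff)

lemma sum_basisD_fun_upd:
  fixes F :: "(nat \<Rightarrow> nat) \<Rightarrow> 'a::comm_semiring_1"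
  assumes "i < m"
  shows "(\<Sum>y\<in>basisD l m. \<Sum>x<(2::nat)^l. F (y(i := x))) = 2^l * (\<Sum>y\<in>basisD l m. F y)"
proof -
  have "(\<Sum>y\<in>basisD l m. \<Sum>x<(2::nat)^l. F (y(i := x))) = (\<Sum>(y, x)\<in>basisD l m \<times> {..<(2::nat)^l}. F (y(i := x)))"
    by (simp add: sum.cartesian_product)
  also have "\<dots> = (\<Sum>(y, x)\<in>basisD l m \<times> {..<(2::nat)^l}. F y)"
    by (rule sum.reindex_bij_witness[where i="\<lambda>(y, x). (y(i := x), y i)" and j="\<lambda>(y, x). (y(i := x), y i)"])
      (auto simp: fun_upd_in_basisD basisD_less assms)
  also have "\<dots> = 2^l * (\<Sum>y\<in>basisD l m. F y)"
    by (simp add: sum.cartesian_product[symmetric]) (simp add: sum_distrib_left)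
  finally show ?thesis .
qed

lemma sum_basisD_zero_fiber:
  fixes G :: "(nat \<Rightarrow> nat) \<Rightarrow> real"
  assumes "i < m" and G: "\<And>y x. G (y(i := x)) = G y"
  shows "(\<Sum>y\<in>{y\<in>basisD l m. y i = 0}. G y) = (\<Sum>y\<in>basisD l m. G y) / 2^l"
proof -
  define F where "F y = (if y i = 0 then G y else 0)" for y
  have "(\<Sum>x<(2::nat)^l. F (y(i := x))) = G y" for y
  proof -
    have "(\<Sum>x<(2::nat)^l. F (y(i := x))) = (\<Sum>x<(2::nat)^l. if x = 0 then G y else 0)"
      by (rule sum.cong) (auto simp: F_def G)
    then show ?thesis by (simp add: sum.delta)
  qed
  then have "2^l * (\<Sum>y\<in>basisD l m. F y) = (\<Sum>y\<in>basisD l m. G y)"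
    using sum_basisD_fun_upd[OF assms(1), of F l] by simp
  moreover have "(\<Sum>y\<in>basisD l m. F y) = (\<Sum>y\<in>{y\<in>basisD l m. y i = 0}. G y)"
    by (simp add: F_def sum.inter_filter[OF finite_basisD])
  ultimately show ?thesis
    by (simp add: field_simps)
qed

lemma sum_cmod_diff_mean_sq:
  fixes f :: "'a \<Rightarrow> complex"
  assumes "(\<Sum>x\<in>A. f x) = of_nat (card A) * c"
  shows "(\<Sum>x\<in>A. (cmod (f x - c))\<^sup>2) = (\<Sum>x\<in>A. (cmod (f x))\<^sup>2) - card A * (cmod c)\<^sup>2"
proof -
  have re: "(\<Sum>x\<in>A. Re (f x)) = card A * Re c" and im: "(\<Sum>x\<in>A. Im (f x)) = card A * Im c"
    using arg_cong[OF assms, of Re] arg_cong[OF assms, of Im] by (simp_all add: Re_sum Im_sum)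
  have "(\<Sum>x\<in>A. (cmod (f x - c))\<^sup>2)
      = (\<Sum>x\<in>A. (cmod (f x))\<^sup>2 - 2 * (Re c * Re (f x) + Im c * Im (f x)) + (cmod c)\<^sup>2)"
    unfolding cmod_power2 by (intro sum.cong) (simp_all add: power2_eq_square algebra_simps)
  also have "\<dots> = (\<Sum>x\<in>A. (cmod (f x))\<^sup>2)
      - 2 * (Re c * (\<Sum>x\<in>A. Re (f x)) + Im c * (\<Sum>x\<in>A. Im (f x))) + card A * (cmod c)\<^sup>2"
    by (simp add: sum.distrib sum_subtractf sum_distrib_left)
  also have "\<dots> = (\<Sum>x\<in>A. (cmod (f x))\<^sup>2) - card A * (cmod c)\<^sup>2"
    unfolding re im cmod_power2 by (simp add: power2_eq_square algebra_simps)
  finally show ?thesis .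
qed

lemma cmod_add_sq_ge:
  fixes p r :: complex and t :: real
  assumes "t > 0"
  shows "(1 - t) * (cmod p)\<^sup>2 - (cmod r)\<^sup>2 / t \<le> (cmod (p + r))\<^sup>2"
proof -
  have "\<bar>cmod p - cmod r\<bar> \<le> cmod (p + r)"
    using norm_triangle_ineq3[of p "-r"] by simp
  then have "(cmod p - cmod r)\<^sup>2 \<le> (cmod (p + r))\<^sup>2"
    by (metis abs_ge_zero power2_abs power_mono)
  moreover have "(1 - t) * (cmod p)\<^sup>2 - (cmod r)\<^sup>2 / t \<le> (cmod p - cmod r)\<^sup>2"
  proof -
    have "t * ((cmod p - cmod r)\<^sup>2 - ((1 - t) * (cmod p)\<^sup>2 - (cmod r)\<^sup>2 / t))
        = (t * cmod p - cmod r)\<^sup>2 + t * (cmod r)\<^sup>2"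
      using assms by (simp add: field_simps power2_eq_square)
    also have "\<dots> \<ge> 0"
      using assms by simp
    finally show ?thesis
      using assms by (simp add: zero_le_mult_iff)
  qed
  ultimately show ?thesis by linarith
qed

text \<open>The projector \<open>|+^l\<rangle>\<langle>+^l|\<close> on register \<open>D_i\<close> has all matrix entries \<open>2^-l\<close>, so it
  replaces the \<open>i\<close>-th coordinate of a vector by its average.\<close>

definition proj_plus :: "nat \<Rightarrow> nat \<Rightarrow> ((nat \<Rightarrow> nat) \<Rightarrow> complex) \<Rightarrow> ((nat \<Rightarrow> nat) \<Rightarrow> complex)" where
  "proj_plus l i f = (\<lambda>y. (\<Sum>x<(2::nat)^l. f (y(i := x))) / 2^l)"

definition sqnorm_vec :: "nat \<Rightarrow> nat \<Rightarrow> ((nat \<Rightarrow> nat) \<Rightarrow> complex) \<Rightarrow> real" where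
  "sqnorm_vec l m f = (\<Sum>y\<in>basisD l m. (cmod (f y))\<^sup>2)"

definition sqnorm_bra0_vec :: "nat \<Rightarrow> nat \<Rightarrow> nat \<Rightarrow> ((nat \<Rightarrow> nat) \<Rightarrow> complex) \<Rightarrow> real" where
  "sqnorm_bra0_vec l m i f = (\<Sum>y\<in>{y\<in>basisD l m. y i = 0}. (cmod (f y))\<^sup>2)"

lemma proj_plus_fun_upd [simp]: "proj_plus l i f (y(i := x)) = proj_plus l i f y"
  by (simp add: proj_plus_def)

lemma proj_plus_commute: "proj_plus l i (proj_plus l j f) = proj_plus l j (proj_plus l i f)"
proof (cases "i = j")
  case False
  have "(\<Sum>x<(2::nat)^l. \<Sum>z<(2::nat)^l. f (y(i := x, j := z)))
      = (\<Sum>z<(2::nat)^l. \<Sum>x<(2::nat)^l. f (y(j := z, i := x)))" for y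
    using False by (subst sum.swap) (simp add: fun_upd_twist)
  then show ?thesis
    by (simp add: proj_plus_def sum_divide_distrib[symmetric])
qed simp

lemma proj_plus_diff: "proj_plus l i (\<lambda>y. f y - g y) = (\<lambda>y. proj_plus l i f y - proj_plus l i g y)"
  by (simp add: proj_plus_def sum_subtractf diff_divide_distrib)

lemma proj_plus_sum: "proj_plus l i (\<lambda>y. \<Sum>j<k. h j y) = (\<lambda>y. \<Sum>j<k. proj_plus l i (h j) y)"
  unfolding proj_plus_def by (simp add: sum_divide_distrib[symmetric] sum.swap[of _ "{..<k}"])

lemma proj_plus_cong:
  "i < m \<Longrightarrow> y \<in> basisD l m \<Longrightarrow> \<forall>y\<in>basisD l m. f y = g y \<Longrightarrow> proj_plus l i f y = proj_plus l i g y"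
  unfolding proj_plus_def by (auto intro!: sum.cong fun_upd_in_basisD)

lemma sqnorm_vec_cong: "\<forall>y\<in>basisD l m. f y = g y \<Longrightarrow> sqnorm_vec l m f = sqnorm_vec l m g"
  unfolding sqnorm_vec_def by (auto intro!: sum.cong)

lemma sqnorm_vec_nonneg: "0 \<le> sqnorm_vec l m f"
  unfolding sqnorm_vec_def by (auto intro!: sum_nonneg)

lemma sqnorm_vec_pythagoras:
  assumes "i < m"
  shows "sqnorm_vec l m f = sqnorm_vec l m (proj_plus l i f) + sqnorm_vec l m (\<lambda>y. f y - proj_plus l i f y)"
proof -
  let ?p = "proj_plus l i f"
  let ?F = "\<lambda>y. (cmod (f y))\<^sup>2" and ?P = "\<lambda>y. (cmod (?p y))\<^sup>2" and ?R = "\<lambda>y. (cmod (f y - ?p y))\<^sup>2"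
  have fiber: "(\<Sum>x<(2::nat)^l. ?F (y(i := x))) = (\<Sum>x<(2::nat)^l. ?P (y(i := x)) + ?R (y(i := x)))" for y
    using sum_cmod_diff_mean_sq[of "\<lambda>x. f (y(i := x))" "{..<(2::nat)^l}" "?p y"]
    by (simp add: proj_plus_def sum.distrib)
  have "2^l * sqnorm_vec l m f = (\<Sum>y\<in>basisD l m. \<Sum>x<(2::nat)^l. ?F (y(i := x)))"
    unfolding sqnorm_vec_def by (rule sum_basisD_fun_upd[OF assms, symmetric])
  also have "\<dots> = (\<Sum>y\<in>basisD l m. \<Sum>x<(2::nat)^l. ?P (y(i := x))) + (\<Sum>y\<in>basisD l m. \<Sum>x<(2::nat)^l. ?R (y(i := x)))"
    by (simp only: fiber sum.distrib)
  also have "\<dots> = 2^l * (sqnorm_vec l m ?p + sqnorm_vec l m (\<lambda>y. f y - ?p y))"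
    by (simp only: sqnorm_vec_def sum_basisD_fun_upd[OF assms, of ?P l] sum_basisD_fun_upd[OF assms, of ?R l]
        distrib_left)
  finally show ?thesis
    by simp
qed

lemma sqnorm_bra0_vec_ge:
  assumes "i < m" and "t > 0"
  shows "((1 - t) / 2^l + 1 / t) * sqnorm_vec l m (proj_plus l i f) - sqnorm_vec l m f / t
    \<le> sqnorm_bra0_vec l m i f"
proof -
  let ?p = "proj_plus l i f" and ?B0 = "{y\<in>basisD l m. y i = 0}"
  have "(1 - t) * (\<Sum>y\<in>?B0. (cmod (?p y))\<^sup>2) - (\<Sum>y\<in>?B0. (cmod (f y - ?p y))\<^sup>2) / t
      = (\<Sum>y\<in>?B0. (1 - t) * (cmod (?p y))\<^sup>2 - (cmod (f y - ?p y))\<^sup>2 / t)"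
    by (simp add: sum_subtractf sum_distrib_left sum_divide_distrib)
  also have "\<dots> \<le> (\<Sum>y\<in>?B0. (cmod (?p y + (f y - ?p y)))\<^sup>2)"
    by (intro sum_mono cmod_add_sq_ge assms(2))
  finally have bound: "(1 - t) * (\<Sum>y\<in>?B0. (cmod (?p y))\<^sup>2) - (\<Sum>y\<in>?B0. (cmod (f y - ?p y))\<^sup>2) / t
      \<le> sqnorm_bra0_vec l m i f"
    by (simp add: sqnorm_bra0_vec_def)
  have "(\<Sum>y\<in>?B0. (cmod (?p y))\<^sup>2) = sqnorm_vec l m ?p / 2^l"
    unfolding sqnorm_vec_def by (rule sum_basisD_zero_fiber[OF assms(1)]) simp
  with bound have "(1 - t) * (sqnorm_vec l m ?p / 2^l) - (\<Sum>y\<in>?B0. (cmod (f y - ?p y))\<^sup>2) / t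
      \<le> sqnorm_bra0_vec l m i f"
    by simp
  moreover have "(\<Sum>y\<in>?B0. (cmod (f y - ?p y))\<^sup>2) / t \<le> sqnorm_vec l m (\<lambda>y. f y - ?p y) / t"
    unfolding sqnorm_vec_def using assms(2) by (intro divide_right_mono sum_mono2[OF finite_basisD]) auto
  moreover have "((1 - t) / 2^l + 1 / t) * sqnorm_vec l m ?p - sqnorm_vec l m f / t
      = (1 - t) * (sqnorm_vec l m ?p / 2^l) - sqnorm_vec l m (\<lambda>y. f y - ?p y) / t"
    using sqnorm_vec_pythagoras[OF assms(1), of l f] assms(2) by (simp add: field_simps)
  ultimately show ?thesis
    by linarith
qed

text \<open>The zero vector is admitted so that the notion is preserved by \<open>h \<mapsto> h - P h\<close>
  for the projector \<open>P\<close> on an additional register.\<close>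

definition plus_on_at_least :: "nat \<Rightarrow> nat \<Rightarrow> nat set \<Rightarrow> ((nat \<Rightarrow> nat) \<Rightarrow> complex) \<Rightarrow> bool" where
  "plus_on_at_least l n I h \<longleftrightarrow>
     h = (\<lambda>_. 0) \<or> (\<exists>S\<subseteq>I. n \<le> card S \<and> (\<forall>i\<in>S. proj_plus l i h = h))"

lemma plus_on_at_least_proj_plus:
  assumes "plus_on_at_least l n (insert i0 I) h"
  shows "plus_on_at_least l (n - 1) I (proj_plus l i0 h)"
proof -
  consider "h = (\<lambda>_. 0)" | S where "S \<subseteq> insert i0 I" "n \<le> card S" "\<forall>i\<in>S. proj_plus l i h = h"
    using assms unfolding plus_on_at_least_def by blast
  then show ?thesis
  proof cases
    case 1
    then show ?thesis
      by (simp add: plus_on_at_least_def proj_plus_def)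
  next
    case 2
    have "n - 1 \<le> card (S - {i0})"
      using diff_card_le_card_Diff[of "{i0}" S] 2(2) by simp
    moreover have "proj_plus l i (proj_plus l i0 h) = proj_plus l i0 h" if "i \<in> S - {i0}" for i
      using 2(3) that proj_plus_commute[of l i i0 h] by simp
    ultimately show ?thesis
      using 2(1) unfolding plus_on_at_least_def by (intro disjI2 exI[of _ "S - {i0}"]) auto
  qed
qed

lemma plus_on_at_least_proj_plus_compl:
  assumes "plus_on_at_least l n (insert i0 I) h"
  shows "plus_on_at_least l n I (\<lambda>y. h y - proj_plus l i0 h y)"
proof -
  consider "h = (\<lambda>_. 0)" | S where "S \<subseteq> insert i0 I" "n \<le> card S" "\<forall>i\<in>S. proj_plus l i h = h"
    using assms unfolding plus_on_at_least_def by blast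
  then show ?thesis
  proof cases
    case 1
    then show ?thesis
      by (simp add: plus_on_at_least_def proj_plus_def)
  next
    case 2
    show ?thesis
    proof (cases "i0 \<in> S")
      case True
      then show ?thesis
        using 2(3) by (simp add: plus_on_at_least_def)
    next
      case False
      have "proj_plus l i (\<lambda>y. h y - proj_plus l i0 h y) = (\<lambda>y. h y - proj_plus l i0 h y)" if "i \<in> S" for i
        using 2(3) that by (simp add: proj_plus_diff proj_plus_commute[of l i i0 h])
      then show ?thesis
        using 2 False unfolding plus_on_at_least_def by (intro disjI2 exI[of _ S]) auto
    qed
  qed
qed

text \<open>Since the projectors \<open>P_i\<close> commute, this says \<open>\<Sum>i\<in>I. P_i \<ge> n\<close> on the span of the vectors
  fixed by at least \<open>n\<close> of them. The induction splits \<open>v = P_i0 v + (v - P_i0 v)\<close>: the first part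
  gains one eigenvalue 1 from \<open>P_i0\<close> and needs only \<open>n - 1\<close> from the rest.\<close>

lemma sum_sqnorm_proj_plus_ge:
  assumes "finite I" "I \<subseteq> {..<m}" "\<forall>j<k. plus_on_at_least l n I (h j)"
  shows "n * sqnorm_vec l m (\<lambda>y. \<Sum>j<k. h j y)
    \<le> (\<Sum>i\<in>I. sqnorm_vec l m (proj_plus l i (\<lambda>y. \<Sum>j<k. h j y)))"
  using assms
proof (induction I arbitrary: n h rule: finite_induct)
  case empty
  then have "n = 0 \<or> (\<forall>j<k. h j = (\<lambda>_. 0))"
    by (auto simp: plus_on_at_least_def)
  then show ?case
    by (auto simp: sqnorm_vec_def)
next
  case (insert i0 I)
  let ?P = "proj_plus l"
  let ?v = "\<lambda>y. \<Sum>j<k. h j y"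
  define hu where "hu j = ?P i0 (h j)" for j
  define hw where "hw j = (\<lambda>y. h j y - ?P i0 (h j) y)" for j
  let ?u = "\<lambda>y. \<Sum>j<k. hu j y" and ?w = "\<lambda>y. \<Sum>j<k. hw j y"
  have i0: "i0 < m"
    using insert.prems by auto
  have u: "?P i0 ?v = ?u"
    by (simp add: proj_plus_sum hu_def)
  have w: "(\<lambda>y. ?v y - ?P i0 ?v y) = ?w"
    unfolding hw_def proj_plus_sum by (simp add: sum_subtractf)
  have IHu: "(n - 1) * sqnorm_vec l m ?u \<le> (\<Sum>i\<in>I. sqnorm_vec l m (?P i ?u))"
    using insert.IH[of "n - 1" hu] insert.prems plus_on_at_least_proj_plus by (auto simp: hu_def)
  have IHw: "n * sqnorm_vec l m ?w \<le> (\<Sum>i\<in>I. sqnorm_vec l m (?P i ?w))"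
    using insert.IH[of n hw] insert.prems plus_on_at_least_proj_plus_compl by (auto simp: hw_def)
  have split: "sqnorm_vec l m (?P i ?v) = sqnorm_vec l m (?P i ?u) + sqnorm_vec l m (?P i ?w)" for i
  proof -
    have "?P i0 (?P i ?v) = ?P i ?u"
      using proj_plus_commute[of l i0 i ?v] by (simp only: u)
    moreover have "(\<lambda>y. ?P i ?v y - ?P i0 (?P i ?v) y) = ?P i ?w"
      using proj_plus_commute[of l i0 i ?v] by (simp only: proj_plus_diff w[symmetric])
    ultimately show ?thesis
      using sqnorm_vec_pythagoras[OF i0, of l "?P i ?v"] by simp
  qed
  have "n * sqnorm_vec l m ?v = n * sqnorm_vec l m ?u + n * sqnorm_vec l m ?w"
    using sqnorm_vec_pythagoras[OF i0, of l ?v] unfolding w unfolding u by (simp add: distrib_left)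
  also have "\<dots> \<le> sqnorm_vec l m ?u + (n - 1) * sqnorm_vec l m ?u + n * sqnorm_vec l m ?w"
    using sqnorm_vec_nonneg[of l m ?u] by (cases n) (simp_all add: algebra_simps)
  also have "\<dots> \<le> sqnorm_vec l m ?u + (\<Sum>i\<in>I. sqnorm_vec l m (?P i ?u)) + (\<Sum>i\<in>I. sqnorm_vec l m (?P i ?w))"
    using IHu IHw by linarith
  also have "\<dots> = sqnorm_vec l m (?P i0 ?v) + (\<Sum>i\<in>I. sqnorm_vec l m (?P i ?v))"
    by (simp only: u split sum.distrib add.assoc)
  also have "\<dots> = (\<Sum>i\<in>insert i0 I. sqnorm_vec l m (?P i ?v))"
    using insert.hyps by simp
  finally show ?case .
qed

lemma plus_on_at_least_W_gens:
  assumes "g \<in> W_gens l m n"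
  shows "plus_on_at_least l n {..<m} (\<lambda>y. c * g y)"
proof -
  obtain S \<phi> where S: "S \<subseteq> {0..<m}" "n \<le> card S"
    and g: "g = (\<lambda>y. complex_of_real ((2 powr (- real l / 2)) ^ card S) * \<phi> (restrict y ({0..<m} - S)))"
    using assms unfolding W_gens_def by blast
  have "g (y(i := x)) = g y" if "i \<in> S" for i y x
  proof -
    have "restrict (y(i := x)) ({0..<m} - S) = restrict y ({0..<m} - S)"
      using that by (auto simp: restrict_def)
    then show ?thesis
      by (simp add: g)
  qed
  then have "proj_plus l i (\<lambda>y. c * g y) = (\<lambda>y. c * g y)" if "i \<in> S" for i
    using that by (simp add: proj_plus_def)
  then show ?thesis
    using S unfolding plus_on_at_least_def by (auto simp: atLeast0LessThan)
qed

lemma sum_sqnorm_proj_plus_ge_in_W: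
  assumes "in_W l m n v"
  shows "n * sqnorm_vec l m v \<le> (\<Sum>i<m. sqnorm_vec l m (proj_plus l i v))"
proof -
  obtain k :: nat and c :: "nat \<Rightarrow> complex" and g where g: "\<forall>j<k. g j \<in> W_gens l m n" and v: "\<forall>y\<in>basisD l m. v y = (\<Sum>j<k. c j * g j y)"
    using assms unfolding in_W_def by blast
  let ?w = "\<lambda>y. \<Sum>j<k. c j * g j y"
  have "n * sqnorm_vec l m ?w \<le> (\<Sum>i<m. sqnorm_vec l m (proj_plus l i ?w))"
    using g plus_on_at_least_W_gens by (intro sum_sqnorm_proj_plus_ge) auto
  moreover have "sqnorm_vec l m (proj_plus l i v) = sqnorm_vec l m (proj_plus l i ?w)" if "i < m" for i
    by (auto intro!: sqnorm_vec_cong proj_plus_cong[OF that _ v])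
  ultimately show ?thesis
    using sqnorm_vec_cong[OF v] by simp
qed

lemma sum_sqnorm_bra0_vec_ge_in_W:
  assumes "in_W l m n v" and "t > 0" and c: "0 \<le> (1 - t) / 2^l + 1 / t"
  shows "(((1 - t) / 2^l + 1 / t) * n - m / t) * sqnorm_vec l m v \<le> (\<Sum>i<m. sqnorm_bra0_vec l m i v)"
proof -
  let ?c = "(1 - t) / 2^l + 1 / t"
  have "(?c * n - m / t) * sqnorm_vec l m v = ?c * (n * sqnorm_vec l m v) - (\<Sum>i<m. sqnorm_vec l m v / t)"
    by (simp add: algebra_simps)
  also have "\<dots> \<le> ?c * (\<Sum>i<m. sqnorm_vec l m (proj_plus l i v)) - (\<Sum>i<m. sqnorm_vec l m v / t)"
    using mult_left_mono[OF sum_sqnorm_proj_plus_ge_in_W[OF assms(1)] c] by linarith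
  also have "\<dots> = (\<Sum>i<m. ?c * sqnorm_vec l m (proj_plus l i v) - sqnorm_vec l m v / t)"
    by (simp add: sum_subtractf sum_distrib_left)
  also have "\<dots> \<le> (\<Sum>i<m. sqnorm_bra0_vec l m i v)"
    using assms(2) by (intro sum_mono sqnorm_bra0_vec_ge) auto
  finally show ?thesis .
qed

lemma has_sum_sum:
  fixes f :: "'i \<Rightarrow> 'a \<Rightarrow> 'b::topological_comm_monoid_add"
  assumes "finite I" and "\<And>i. i \<in> I \<Longrightarrow> (f i has_sum s i) A"
  shows "((\<lambda>x. \<Sum>i\<in>I. f i x) has_sum (\<Sum>i\<in>I. s i)) A"
  using assms by (induction I rule: finite_induct) (auto intro: has_sum_add)

lemma has_sum_sum_sq_slices:
  assumes "in_DE l m psi" and "B \<subseteq> basisD l m"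
  shows "((\<lambda>e. \<Sum>y\<in>B. (cmod (psi y e))\<^sup>2) has_sum (\<Sum>y\<in>B. \<Sum>\<^sub>\<infinity>e. (cmod (psi y e))\<^sup>2)) UNIV"
  using assms finite_subset[OF assms(2) finite_basisD]
  by (intro has_sum_sum has_sum_infsum) (auto simp: in_DE_def)

definition sqnorm_bra0 :: "nat \<Rightarrow> nat \<Rightarrow> nat \<Rightarrow> ((nat \<Rightarrow> nat) \<Rightarrow> 'e \<Rightarrow> complex) \<Rightarrow> real" where
  "sqnorm_bra0 l m i psi = (\<Sum>y\<in>{y\<in>basisD l m. y i = 0}. \<Sum>\<^sub>\<infinity>e. (cmod (psi y e))\<^sup>2)"

definition proj0_D1 :: "(nat \<Rightarrow> nat) \<Rightarrow> (nat \<Rightarrow> nat) \<Rightarrow> complex" where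
  "proj0_D1 y y' = (if y = y' \<and> y 0 = 0 then 1 else 0)"

lemma sqnorm_applyD_proj0_D1: "sqnorm l m (applyD l m proj0_D1 psi) = sqnorm_bra0_D1 l m psi"
proof -
  have "applyD l m proj0_D1 psi y e = (if y 0 = 0 then psi y e else 0)" if "y \<in> basisD l m" for y e
    using that by (simp add: applyD_def proj0_D1_def if_distrib[of "\<lambda>c. c * _"] sum.delta finite_basisD
        conj_commute[of "y = _"] cong: if_cong)
  then have "sqnorm l m (applyD l m proj0_D1 psi)
      = (\<Sum>y\<in>basisD l m. if y 0 = 0 then \<Sum>\<^sub>\<infinity>e. (cmod (psi y e))\<^sup>2 else 0)"
    unfolding sqnorm_def by (intro sum.cong) auto
  then show ?thesis
    by (simp add: sqnorm_bra0_D1_def sum.inter_filter[OF finite_basisD])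
qed

lemma sqnorm_bra0_D1_permD_transpose:
  assumes "i < m"
  shows "sqnorm_bra0_D1 l m (permD (Transposition.transpose 0 i) psi) = sqnorm_bra0 l m i psi"
proof -
  let ?\<pi> = "Transposition.transpose 0 i"
  have swap: "y \<circ> ?\<pi> \<in> basisD l m" if "y \<in> basisD l m" for y
    using that assms by (auto simp: basisD_def PiE_iff extensional_def Transposition.transpose_def)
  show ?thesis
    unfolding sqnorm_bra0_D1_def sqnorm_bra0_def permD_def
    by (rule sum.reindex_bij_witness[where i="\<lambda>y. y \<circ> ?\<pi>" and j="\<lambda>y. y \<circ> ?\<pi>"])
      (auto simp: swap comp_assoc)
qed

lemma sqnorm_bra0_eq_D1:
  assumes "i < m"
    and "\<forall>A \<pi>. \<pi> permutes {0..<m} \<longrightarrow>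
           vnorm l m (applyD l m A (permD \<pi> psi)) = vnorm l m (applyD l m A psi)"
  shows "sqnorm_bra0 l m i psi = sqnorm_bra0_D1 l m psi"
proof -
  have "Transposition.transpose 0 i permutes {0..<m}"
    using assms(1) by (intro permutes_swap_id) auto
  then have "vnorm l m (applyD l m proj0_D1 (permD (Transposition.transpose 0 i) psi))
      = vnorm l m (applyD l m proj0_D1 psi)"
    using assms(2) by blast
  then show ?thesis
    by (simp add: vnorm_def sqnorm_applyD_proj0_D1 sqnorm_bra0_D1_permD_transpose[OF assms(1)])
qed

lemma sqnorm_bra0_D1_ge_param:
  assumes "in_W_E l m n psi" and "sqnorm l m psi = 1"
    and sym: "\<forall>A \<pi>. \<pi> permutes {0..<m} \<longrightarrow>
           vnorm l m (applyD l m A (permD \<pi> psi)) = vnorm l m (applyD l m A psi)"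
    and "t > 0" and "0 \<le> (1 - t) / 2^l + 1 / t"
  shows "((1 - t) / 2^l + 1 / t) * n - m / t \<le> m * sqnorm_bra0_D1 l m psi"
proof -
  have DE: "in_DE l m psi" and W: "\<And>e. in_W l m n (\<lambda>y. psi y e)"
    using assms(1) by (auto simp: in_W_E_def)
  have "((\<lambda>e. sqnorm_vec l m (\<lambda>y. psi y e)) has_sum 1) UNIV"
    using has_sum_sum_sq_slices[OF DE order_refl] assms(2) by (simp add: sqnorm_vec_def sqnorm_def)
  then have lhs: "((\<lambda>e. (((1 - t) / 2^l + 1 / t) * n - m / t) * sqnorm_vec l m (\<lambda>y. psi y e))
      has_sum ((1 - t) / 2^l + 1 / t) * n - m / t) UNIV"
    using has_sum_cmult_right by fastforce
  have "((\<lambda>e. \<Sum>i<m. sqnorm_bra0_vec l m i (\<lambda>y. psi y e)) has_sum (\<Sum>i<m. sqnorm_bra0 l m i psi)) UNIV"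
    using has_sum_sum_sq_slices[OF DE]
    by (intro has_sum_sum) (auto simp: sqnorm_bra0_vec_def sqnorm_bra0_def)
  moreover have "(\<Sum>i<m. sqnorm_bra0 l m i psi) = m * sqnorm_bra0_D1 l m psi"
    using sqnorm_bra0_eq_D1[OF _ sym] by simp
  ultimately show ?thesis
    using has_sum_mono[OF lhs] sum_sqnorm_bra0_vec_ge_in_W[OF W assms(4,5)] by metis
qed

lemma le_of_param_lower_bounds:
  fixes a p Z :: real
  assumes a: "0 < a" "a \<le> 1" and p: "0 \<le> p" "p \<le> 1" and "0 \<le> Z"
    and bound: "\<And>t. 0 < t \<Longrightarrow> a * t\<^sup>2 \<le> 1 \<Longrightarrow> a * p - (t * a * p + (1 - p) / t) \<le> Z"
  shows "a * p - 2 * sqrt (a * p * (1 - p)) \<le> Z"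
proof -
  define r where "r = sqrt (a * p * (1 - p))"
  have r: "0 \<le> r" "r\<^sup>2 = a * p * (1 - p)"
    using a p by (simp_all add: r_def)
  consider "p = 1" | "1 / 2 \<le> p" "p < 1" | "p < 1 / 2"
    using p by linarith
  then show ?thesis
  proof cases
    case 1
    have "a \<le> Z + \<epsilon>" if "\<epsilon> > 0" for \<epsilon>
    proof -
      define t where "t = min 1 (\<epsilon> / a)"
      have t: "0 < t" "t \<le> 1" "t * a \<le> \<epsilon>"
        using that a by (auto simp: t_def min_def field_simps)
      then have "a * t\<^sup>2 \<le> 1"
        using a by (simp add: power2_eq_square mult_le_one)
      then show ?thesis
        using bound[OF t(1)] t(3) 1 by simp
    qed
    then show ?thesis
      using 1 by (simp add: field_le_epsilon)
  next
    case 2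
    text \<open>The optimal parameter balances the two terms: \<open>t * a * p = (1 - p) / t = r\<close>.\<close>
    define t where "t = r / (a * p)"
    have "0 < r"
      using 2 a by (simp add: r_def)
    then have t: "0 < t" "t * a * p = r" "(1 - p) / t = r"
      using 2 a r(2) by (auto simp: t_def field_simps power2_eq_square)
    have "a * t\<^sup>2 = (1 - p) / p"
      using 2 a r(2) by (simp add: t_def field_simps power2_eq_square)
    also have "\<dots> \<le> 1"
      using 2 by simp
    finally show ?thesis
      using bound[OF t(1)] t(2,3) by (simp add: r_def)
  next
    case 3
    have "a * p \<le> 1 - p"
      using 3 a p mult_left_le_one_le[of p a] by linarith
    then have "(a * p)\<^sup>2 \<le> r\<^sup>2"
      unfolding r(2) unfolding power2_eq_square using a p by (intro mult_left_mono) auto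
    then have "a * p \<le> r"
      using r(1) by (simp add: power2_le_iff_abs_le)
    then show ?thesis
      using r(1) \<open>0 \<le> Z\<close> unfolding r_def[symmetric] by linarith
  qed
qed

theorem lemma7:
  fixes l m n :: nat
    and psi :: "(nat \<Rightarrow> nat) \<Rightarrow> 'e \<Rightarrow> complex"
  assumes "l \<ge> 1" and "m \<ge> n" and "m \<ge> 1"
    and "in_W_E l m n psi"
    and "sqnorm l m psi = 1"
    and "\<forall>A \<pi>. \<pi> permutes {0..<m} \<longrightarrow>
           vnorm l m (applyD l m A (permD \<pi> psi)) = vnorm l m (applyD l m A psi)"
  shows "sqnorm_bra0_D1 l m psi \<ge>
           2 powr (- real l) * real n / real m
           - 2 powr (1 - real l / 2) * sqrt (real n * real (m - n) / (real m)\<^sup>2)"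
proof -
  define a :: real where "a = 2 powr - real l"
  define p :: real where "p = n / m"
  have m: "0 < real m" and p: "0 \<le> p" "p \<le> 1"
    using assms(2,3) by (simp_all add: p_def)
  have a: "a = 1 / 2^l" "0 < a" "a \<le> 1"
    by (simp_all add: a_def powr_minus_divide powr_realpow)
  have "a * p - (t * a * p + (1 - p) / t) \<le> sqnorm_bra0_D1 l m psi" if "0 < t" "a * t\<^sup>2 \<le> 1" for t
  proof -
    have "t * a \<le> 1 / t"
      using that by (simp add: field_simps power2_eq_square)
    then have "0 \<le> (1 - t) / 2^l + 1 / t"
      using a by (simp add: field_simps)
    from sqnorm_bra0_D1_ge_param[OF assms(4-6) that(1) this]
    have "((1 - t) / 2^l + 1 / t) * n - m / t \<le> m * sqnorm_bra0_D1 l m psi" .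
    moreover have "((1 - t) / 2^l + 1 / t) * n - m / t = m * (a * p - (t * a * p + (1 - p) / t))"
      using m that(1) by (simp add: a(1) p_def field_simps)
    ultimately show ?thesis
      using m by simp
  qed
  moreover have "0 \<le> sqnorm_bra0_D1 l m psi"
    unfolding sqnorm_bra0_D1_def by (intro sum_nonneg infsum_nonneg) auto
  ultimately have "a * p - 2 * sqrt (a * p * (1 - p)) \<le> sqnorm_bra0_D1 l m psi"
    using le_of_param_lower_bounds[OF a(2,3) p] by blast
  moreover have "2 * sqrt (a * p * (1 - p)) = 2 powr (1 - real l / 2) * sqrt (n * real (m - n) / (real m)\<^sup>2)"
  proof -
    have "2 * sqrt (a * p * (1 - p)) = (2 * sqrt a) * sqrt (p * (1 - p))"
      by (simp add: real_sqrt_mult mult.assoc)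
    moreover have "2 * sqrt a = 2 powr (1 - real l / 2)"
    proof -
      have "sqrt a = 2 powr (- real l / 2)"
        by (simp add: a_def powr_half_sqrt[symmetric] powr_powr)
      then show ?thesis
        using powr_add[of 2 1 "- real l / 2"] by simp
    qed
    moreover have "p * (1 - p) = n * real (m - n) / (real m)\<^sup>2"
      using m assms(2) by (simp add: p_def of_nat_diff field_simps power2_eq_square)
    ultimately show ?thesis
      by simp
  qed
  ultimately show ?thesis
    by (simp add: a_def p_def)
qed

end
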